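(* Let $M$ be a compact pointed metric space and assume that $\mathrm{lip}_0(M)$ is $1$-norming for $\mathcal F(M)$, so that $\mathcal F(M)$ is isometrically the dual of $\mathrm{lip}_0(M)$. Then $\mathcal F(M)$ is weak$^*$-asymptotically uniformly convex (with respect to the weak$^*$ topology $\sigma(\mathcal F(M),\mathrm{lip}_0(M))$).
   Context: A pointed metric space $M$ has a distinguished origin $0$. $\mathrm{Lip}_0(M)$ is the Banach space of real Lipschitz functions on $M$ vanishing at $0$ with the best Lipschitz constant as norm; $\delta(x)$ is evaluation at $x$, and the Lipschitz free space $\mathcal F(M)$ is the closed linear span of $\delta(M)$ in $\mathrm{Lip}_0(M)^*$. $\mathrm{lip}_0(M)=\{f\in\mathrm{Lip}_0(M): \lim_{\varepsilon\to0}\sup_{0<d(x,y)<\varepsilon}|f(x)-f(y)|/d(x,y)=0\}$; it is $1$-norming if $\|\mu\|=\sup\{\langle f,\mu\rangle: f\in\mathrm{lip}_0(M),\|f\|_L\le1\}$ for every $\mu\in\mathcal F(M)$. For a dual space $X^*$ of a separable Banach space $X$, the modulus of weak$^*$-asymptotic uniform convexity is $\overline\delta^*_{X^*}(t)=\inf_{x^*\in S_{X^*}}\inf\{\liminf_n\|x^*+x_n^*\|-1: (x_n^* )\subset X^*\ \text{weak}^*\text{-null},\ \|x_n^*\|\ge t\}$, and $X^*$ is weak$^*$-asymptotically uniformly convex if $\overline\delta^*_{X^*}(t)>0$ for every $t>0$. *)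

theory Defs
  imports "HOL-Analysis.Analysis"
begin

text \<open>Pointed metric space: a set M in a metric space type with base point z \<in> M.
  Functions are real functions, only their values on M matter.\<close>

definition Lip0 :: "'a::metric_space set \<Rightarrow> 'a \<Rightarrow> ('a \<Rightarrow> real) set" where
  "Lip0 M z = {f. f z = 0 \<and> (\<exists>C. lipschitz_on C M f)}"

definition lip_norm :: "'a::metric_space set \<Rightarrow> ('a \<Rightarrow> real) \<Rightarrow> real" where
  "lip_norm M f = Sup ({0} \<union> {\<bar>f x - f y\<bar> / dist x y | x y. x \<in> M \<and> y \<in> M \<and> x \<noteq> y})"

definition lip0 :: "'a::metric_space set \<Rightarrow> 'a \<Rightarrow> ('a \<Rightarrow> real) set" where
  "lip0 M z = {f \<in> Lip0 M z. \<forall>e>0. \<exists>\<epsilon>>0. \<forall>x\<in>M. \<forall>y\<in>M.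
      0 < dist x y \<and> dist x y < \<epsilon> \<longrightarrow> \<bar>f x - f y\<bar> \<le> e * dist x y}"

text \<open>Elements of Lip0(M)^* are represented as functionals on functions 'a => real
  (only their values on Lip0 M z are relevant). A finite linear combination of
  evaluations at points of M is given by a finitely supported coefficient function c.\<close>

definition molecule :: "'a set \<Rightarrow> ('a \<Rightarrow> real) \<Rightarrow> bool" where
  "molecule M c \<longleftrightarrow> finite {x. c x \<noteq> 0} \<and> {x. c x \<noteq> 0} \<subseteq> M"

definition mol_eval :: "('a \<Rightarrow> real) \<Rightarrow> ('a \<Rightarrow> real) \<Rightarrow> real" where
  "mol_eval c f = (\<Sum>x\<in>{x. c x \<noteq> 0}. c x * f x)"

text \<open>Free space: norm closure in Lip0(M)^* of span of delta(M).\<close>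
definition free_space :: "'a::metric_space set \<Rightarrow> 'a \<Rightarrow> (('a \<Rightarrow> real) \<Rightarrow> real) set" where
  "free_space M z = {\<mu>. \<forall>e>0. \<exists>c. molecule M c \<and>
      (\<forall>f\<in>Lip0 M z. lip_norm M f \<le> 1 \<longrightarrow> \<bar>\<mu> f - mol_eval c f\<bar> \<le> e)}"

definition fnorm :: "'a::metric_space set \<Rightarrow> 'a \<Rightarrow> (('a \<Rightarrow> real) \<Rightarrow> real) \<Rightarrow> real" where
  "fnorm M z \<mu> = Sup {\<mu> f | f. f \<in> Lip0 M z \<and> lip_norm M f \<le> 1}"

definition lip0_one_norming :: "'a::metric_space set \<Rightarrow> 'a \<Rightarrow> bool" where
  "lip0_one_norming M z \<longleftrightarrow> (\<forall>\<mu>\<in>free_space M z.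
      fnorm M z \<mu> = Sup {\<mu> f | f. f \<in> lip0 M z \<and> lip_norm M f \<le> 1})"

definition wstar_null :: "'a::metric_space set \<Rightarrow> 'a \<Rightarrow> (nat \<Rightarrow> ('a \<Rightarrow> real) \<Rightarrow> real) \<Rightarrow> bool" where
  "wstar_null M z \<nu> \<longleftrightarrow> (\<forall>f\<in>lip0 M z. (\<lambda>n. \<nu> n f) \<longlonglongrightarrow> 0)"

definition wstar_AUC_modulus :: "'a::metric_space set \<Rightarrow> 'a \<Rightarrow> real \<Rightarrow> ereal" where
  "wstar_AUC_modulus M z t = Inf {liminf (\<lambda>n. ereal (fnorm M z (\<lambda>f. \<mu> f + \<nu> n f))) - 1 | \<mu> \<nu>.
      \<mu> \<in> free_space M z \<and> fnorm M z \<mu> = 1 \<and> (\<forall>n. \<nu> n \<in> free_space M z) \<and>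
      wstar_null M z \<nu> \<and> (\<forall>n. fnorm M z (\<nu> n) \<ge> t)}"

definition wstar_AUC :: "'a::metric_space set \<Rightarrow> 'a \<Rightarrow> bool" where
  "wstar_AUC M z \<longleftrightarrow> (\<forall>t>0. wstar_AUC_modulus M z t > 0)"

end

theory Submission
  imports Defs
begin

(* Since lip0(M) is norming,
   there are f and g_n in the unit ball of lip0(M) with mu f close to 1 and nu_n g_n close to t.
   By compactness the g_n fall into finitely many classes of uniformly close functions, so each
   g_n has a partner g_n' from a fixed finite set, uniformly close to g_n; by weak*-nullity nu_n
   is eventually small on f and on that finite set. The test function
   (1 - eps/2) f + (g_n - g_n')/4 is 1-Lipschitz: at small distances f is flat because it is
   little Lipschitz, at large distances g_n - g_n' is negligible. Testing mu + nu_n on it gives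
   norm at least 1 + t/8, for all large n. *)

definition Lip0_ball :: "'a::metric_space set \<Rightarrow> 'a \<Rightarrow> ('a \<Rightarrow> real) set" where
  "Lip0_ball M z = {f \<in> Lip0 M z. lip_norm M f \<le> 1}"

lemma Lip0_ball_iff:
  "f \<in> Lip0_ball M z \<longleftrightarrow> f z = 0 \<and> (\<forall>x\<in>M. \<forall>y\<in>M. \<bar>f x - f y\<bar> \<le> dist x y)"
proof
  assume f: "f \<in> Lip0_ball M z"
  then obtain C where C: "lipschitz_on C M f" and fz: "f z = 0"
    unfolding Lip0_ball_def Lip0_def by auto
  let ?Q = "{0} \<union> {\<bar>f x - f y\<bar> / dist x y | x y. x \<in> M \<and> y \<in> M \<and> x \<noteq> y}"
  have "bdd_above ?Q"
  proof (rule bdd_aboveI)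
    fix r assume "r \<in> ?Q"
    then show "r \<le> max 0 C"
    proof
      assume "r \<in> {\<bar>f x - f y\<bar> / dist x y | x y. x \<in> M \<and> y \<in> M \<and> x \<noteq> y}"
      then obtain a b where ab: "r = \<bar>f a - f b\<bar> / dist a b" "a \<in> M" "b \<in> M" "a \<noteq> b"
        by auto
      then have "\<bar>f a - f b\<bar> \<le> C * dist a b"
        using lipschitz_onD[OF C] by (simp add: dist_real_def)
      then have "r \<le> C" using ab by (simp add: divide_le_eq)
      then show ?thesis by simp
    qed simp
  qed
  then have quotient_le: "\<bar>f x - f y\<bar> / dist x y \<le> lip_norm M f" if "x \<in> M" "y \<in> M" "x \<noteq> y" for x y
    unfolding lip_norm_def by (rule cSup_upper[rotated]) (use that in blast)
  have "\<bar>f x - f y\<bar> \<le> dist x y" if "x \<in> M" "y \<in> M" for x y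
  proof (cases "x = y")
    case False
    then have "\<bar>f x - f y\<bar> \<le> lip_norm M f * dist x y"
      using quotient_le[OF that False] by (simp add: divide_le_eq)
    also have "\<dots> \<le> dist x y"
      using f mult_right_mono[of "lip_norm M f" 1 "dist x y"] unfolding Lip0_ball_def by simp
    finally show ?thesis .
  qed simp
  with fz show "f z = 0 \<and> (\<forall>x\<in>M. \<forall>y\<in>M. \<bar>f x - f y\<bar> \<le> dist x y)"
    by blast
next
  assume f: "f z = 0 \<and> (\<forall>x\<in>M. \<forall>y\<in>M. \<bar>f x - f y\<bar> \<le> dist x y)"
  then have "f \<in> Lip0 M z"
    unfolding Lip0_def by (auto intro!: exI[of _ 1] lipschitz_onI simp: dist_real_def)
  moreover have "lip_norm M f \<le> 1"
    unfolding lip_norm_def using f by (intro cSup_least) (auto simp: divide_le_eq)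
  ultimately show "f \<in> Lip0_ball M z"
    unfolding Lip0_ball_def by simp
qed

lemma Lip0_ballD:
  "f \<in> Lip0_ball M z \<Longrightarrow> x \<in> M \<Longrightarrow> y \<in> M \<Longrightarrow> \<bar>f x - f y\<bar> \<le> dist x y"
  by (simp add: Lip0_ball_iff)

lemma fnorm_eq: "fnorm M z \<mu> = Sup (\<mu> ` Lip0_ball M z)"
  unfolding fnorm_def Lip0_ball_def by (simp add: setcompr_eq_image)

lemma mol_eval_lincomb:
  "mol_eval c (\<lambda>x. a * f x + b * g x) = a * mol_eval c f + b * mol_eval c g"
  unfolding mol_eval_def by (simp add: algebra_simps sum.distrib sum_distrib_left)

lemma mol_eval_abs_le:
  assumes "molecule M c" "\<And>x. x \<in> M \<Longrightarrow> \<bar>w x\<bar> \<le> s"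
  shows "\<bar>mol_eval c w\<bar> \<le> (\<Sum>x\<in>{x. c x \<noteq> 0}. \<bar>c x\<bar>) * s"
proof -
  have "\<bar>mol_eval c w\<bar> \<le> (\<Sum>x\<in>{x. c x \<noteq> 0}. \<bar>c x * w x\<bar>)"
    unfolding mol_eval_def by (rule sum_abs)
  also have "\<dots> \<le> (\<Sum>x\<in>{x. c x \<noteq> 0}. \<bar>c x\<bar> * s)"
    using assms unfolding molecule_def
    by (intro sum_mono) (auto simp: abs_mult intro!: mult_left_mono)
  finally show ?thesis by (simp add: sum_distrib_right)
qed

lemma free_spaceE:
  assumes "\<mu> \<in> free_space M z" "e > 0"
  obtains c where "molecule M c" "\<And>f. f \<in> Lip0_ball M z \<Longrightarrow> \<bar>\<mu> f - mol_eval c f\<bar> \<le> e"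
  using assms unfolding free_space_def Lip0_ball_def by blast

text \<open>Elements of \<open>free_space\<close> are arbitrary functionals that are merely approximable by
  molecules; linearity on the unit ball is inherited from these approximations.\<close>

lemma free_space_lincomb:
  assumes "\<mu> \<in> free_space M z" "u \<in> Lip0_ball M z" "v \<in> Lip0_ball M z"
    and "(\<lambda>x. a * u x + b * v x) \<in> Lip0_ball M z"
  shows "\<mu> (\<lambda>x. a * u x + b * v x) = a * \<mu> u + b * \<mu> v"
proof -
  let ?d = "\<mu> (\<lambda>x. a * u x + b * v x) - (a * \<mu> u + b * \<mu> v)"
  have bound: "\<bar>?d\<bar> \<le> (1 + \<bar>a\<bar> + \<bar>b\<bar>) * e" if "e > 0" for e
  proof -
    obtain c where c: "\<And>f. f \<in> Lip0_ball M z \<Longrightarrow> \<bar>\<mu> f - mol_eval c f\<bar> \<le> e"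
      using free_spaceE[OF assms(1) \<open>e > 0\<close>] by blast
    have "\<bar>a * \<mu> u - a * mol_eval c u\<bar> \<le> \<bar>a\<bar> * e" "\<bar>b * \<mu> v - b * mol_eval c v\<bar> \<le> \<bar>b\<bar> * e"
      using c[OF assms(2)] c[OF assms(3)]
      by (simp_all add: abs_mult mult_left_mono flip: right_diff_distrib)
    moreover have "\<bar>\<mu> (\<lambda>x. a * u x + b * v x) - (a * mol_eval c u + b * mol_eval c v)\<bar> \<le> e"
      using c[OF assms(4)] by (simp add: mol_eval_lincomb)
    ultimately show ?thesis
      unfolding abs_le_iff by (simp add: algebra_simps)
  qed
  have "\<bar>?d\<bar> \<le> 0 + e" if "e > 0" for e
  proof -
    define K where "K = 1 + \<bar>a\<bar> + \<bar>b\<bar>"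
    have "K > 0" unfolding K_def by (simp add: add_pos_nonneg)
    then have "\<bar>?d\<bar> \<le> K * (e / K)"
      using bound[of "e / K"] \<open>e > 0\<close> unfolding K_def by simp
    with \<open>K > 0\<close> show ?thesis by simp
  qed
  then have "\<bar>?d\<bar> \<le> 0"
    by (rule field_le_epsilon)
  then show ?thesis by simp
qed

lemma zero_in_lip0_Lip0_ball: "(\<lambda>x. 0) \<in> lip0 M z \<inter> Lip0_ball M z"
proof -
  have "(\<lambda>x. 0) \<in> Lip0_ball M z" by (simp add: Lip0_ball_iff)
  then show ?thesis unfolding lip0_def Lip0_ball_def by auto
qed

lemma free_space_bounded:
  assumes "\<mu> \<in> free_space M z" "z \<in> M"
  obtains B where "\<And>f. f \<in> Lip0_ball M z \<Longrightarrow> \<bar>\<mu> f\<bar> \<le> B"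
proof -
  obtain c where c: "molecule M c" "\<And>f. f \<in> Lip0_ball M z \<Longrightarrow> \<bar>\<mu> f - mol_eval c f\<bar> \<le> 1"
    using free_spaceE[OF assms(1), of 1] by auto
  have "\<bar>\<mu> f\<bar> \<le> 1 + (\<Sum>x\<in>{x. c x \<noteq> 0}. \<bar>c x\<bar> * dist x z)" if f: "f \<in> Lip0_ball M z" for f
  proof -
    have "\<bar>mol_eval c f\<bar> \<le> (\<Sum>x\<in>{x. c x \<noteq> 0}. \<bar>c x * f x\<bar>)"
      unfolding mol_eval_def by (rule sum_abs)
    also have "\<dots> \<le> (\<Sum>x\<in>{x. c x \<noteq> 0}. \<bar>c x\<bar> * dist x z)"
    proof (rule sum_mono)
      fix x assume "x \<in> {x. c x \<noteq> 0}"
      then have "\<bar>f x - f z\<bar> \<le> dist x z"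
        using c(1) f assms(2) unfolding molecule_def by (auto intro: Lip0_ballD)
      then show "\<bar>c x * f x\<bar> \<le> \<bar>c x\<bar> * dist x z"
        using f by (simp add: Lip0_ball_iff abs_mult mult_left_mono)
    qed
    finally show ?thesis using c(2)[OF f] by linarith
  qed
  then show ?thesis using that by blast
qed

lemma fnorm_upper:
  assumes "\<And>f. f \<in> Lip0_ball M z \<Longrightarrow> \<bar>\<mu> f\<bar> \<le> B" "h \<in> Lip0_ball M z"
  shows "\<mu> h \<le> fnorm M z \<mu>"
  unfolding fnorm_eq
proof (rule cSup_upper)
  show "bdd_above (\<mu> ` Lip0_ball M z)"
    using assms(1) by (auto intro!: bdd_aboveI2[of _ _ B] simp: abs_le_iff)
qed (use assms(2) in simp)

lemma fnorm_add_lower: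
  assumes "\<mu> \<in> free_space M z" "\<nu> \<in> free_space M z" "z \<in> M" "h \<in> Lip0_ball M z"
  shows "\<mu> h + \<nu> h \<le> fnorm M z (\<lambda>f. \<mu> f + \<nu> f)"
proof -
  obtain B1 B2 where B1: "\<And>f. f \<in> Lip0_ball M z \<Longrightarrow> \<bar>\<mu> f\<bar> \<le> B1"
    and B2: "\<And>f. f \<in> Lip0_ball M z \<Longrightarrow> \<bar>\<nu> f\<bar> \<le> B2"
    using free_space_bounded[OF assms(1,3)] free_space_bounded[OF assms(2,3)] by metis
  have "\<bar>\<mu> f + \<nu> f\<bar> \<le> B1 + B2" if "f \<in> Lip0_ball M z" for f
    using abs_triangle_ineq[of "\<mu> f" "\<nu> f"] B1[OF that] B2[OF that] by linarith
  from fnorm_upper[OF this assms(4)] show ?thesis .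
qed

lemma lip0_one_norming_witness:
  assumes "lip0_one_norming M z" "\<mu> \<in> free_space M z" "y < fnorm M z \<mu>"
  obtains f where "f \<in> lip0 M z" "f \<in> Lip0_ball M z" "y < \<mu> f"
proof -
  have "y < Sup (\<mu> ` (lip0 M z \<inter> Lip0_ball M z))"
    using assms unfolding lip0_one_norming_def Lip0_ball_def lip0_def
    by (auto simp: setcompr_eq_image Int_def conj_commute)
  from less_cSupE[OF this] zero_in_lip0_Lip0_ball show ?thesis
    using that by blast
qed

lemma free_space_small_on_uniformly_small:
  assumes "\<mu> \<in> free_space M z" "e > 0"
  obtains \<delta> where "\<delta> > 0" "\<And>u. u \<in> Lip0_ball M z \<Longrightarrow> \<forall>x\<in>M. \<bar>u x\<bar> \<le> \<delta> \<Longrightarrow> \<bar>\<mu> u\<bar> \<le> e"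
proof -
  obtain c where c: "molecule M c" "\<And>f. f \<in> Lip0_ball M z \<Longrightarrow> \<bar>\<mu> f - mol_eval c f\<bar> \<le> e / 2"
    using free_spaceE[OF assms(1), of "e / 2"] assms(2) by auto
  define A where "A = (\<Sum>x\<in>{x. c x \<noteq> 0}. \<bar>c x\<bar>)"
  have "A \<ge> 0" unfolding A_def by (rule sum_nonneg) auto
  define \<delta> where "\<delta> = e / (2 * (A + 1))"
  have "\<delta> > 0" "A * \<delta> \<le> e / 2"
    using \<open>A \<ge> 0\<close> assms(2) unfolding \<delta>_def by (auto simp: field_simps)
  moreover have "\<bar>\<mu> u\<bar> \<le> e" if "u \<in> Lip0_ball M z" "\<forall>x\<in>M. \<bar>u x\<bar> \<le> \<delta>" for u
  proof -
    have "\<bar>mol_eval c u\<bar> \<le> A * \<delta>"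
      unfolding A_def using that(2) by (intro mol_eval_abs_le[OF c(1)]) auto
    then show ?thesis using c(2)[OF that(1)] \<open>A * \<delta> \<le> e / 2\<close> by linarith
  qed
  ultimately show ?thesis using that by blast
qed

lemma finite_range_representatives:
  fixes \<phi> :: "'a \<Rightarrow> 'b"
  assumes "finite (range \<phi>)"
  obtains r :: "'a \<Rightarrow> 'a" where "finite (range r)" "\<And>n. \<phi> (r n) = \<phi> n"
proof -
  define r where "r n = (SOME m. \<phi> m = \<phi> n)" for n
  have "\<phi> (r n) = \<phi> n" for n
    unfolding r_def by (rule someI) (rule refl)
  moreover have "range r \<subseteq> (\<lambda>v. SOME m. \<phi> m = v) ` range \<phi>"
    unfolding r_def by auto
  then have "finite (range r)"
    using assms by (rule finite_subset[OF _ finite_imageI])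
  ultimately show ?thesis using that by blast
qed

lemma floor_divide_eq_imp_abs_diff_less:
  fixes a b \<rho> :: real
  assumes "\<rho> > 0" "\<lfloor>a / \<rho>\<rfloor> = \<lfloor>b / \<rho>\<rfloor>"
  shows "\<bar>a - b\<bar> < \<rho>"
proof -
  have "\<bar>a / \<rho> - b / \<rho>\<bar> < 1"
    using floor_correct[of "a / \<rho>"] floor_correct[of "b / \<rho>"] assms(2) by linarith
  then show ?thesis
    using assms(1) by (simp add: abs_divide divide_less_eq flip: diff_divide_distrib)
qed

text \<open>On a compact space the unit ball of \<open>Lip0\<close> is totally bounded in the sup norm: rounding
  the values on a finite \<open>\<rho>\<close>-net to multiples of \<open>\<rho>\<close> sorts any sequence into finitely many
  classes of uniformly close functions.\<close>

lemma Lip0_ball_sequence_uniformly_close: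
  assumes "compact M" "z \<in> M" "\<And>n. g n \<in> Lip0_ball M z" "s > 0"
  obtains r :: "nat \<Rightarrow> nat" where "finite (range r)" "\<And>n x. x \<in> M \<Longrightarrow> \<bar>g n x - g (r n) x\<bar> \<le> s"
proof -
  define \<rho> where "\<rho> = s / 3"
  have "\<rho> > 0" using assms(4) unfolding \<rho>_def by simp
  obtain P where P: "P \<subseteq> M" "finite P" "M \<subseteq> (\<Union>p\<in>P. ball p \<rho>)"
    using compactE_image[OF assms(1), of M "\<lambda>p. ball p \<rho>"] \<open>\<rho> > 0\<close> by force
  define \<phi> where "\<phi> n = restrict (\<lambda>p. \<lfloor>g n p / \<rho>\<rfloor>) P" for n
  have "\<lfloor>g n p / \<rho>\<rfloor> \<in> {\<lfloor>- dist p z / \<rho>\<rfloor> .. \<lfloor>dist p z / \<rho>\<rfloor>}" if "p \<in> P" for n p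
  proof -
    have "\<bar>g n p\<bar> \<le> dist p z"
      using Lip0_ballD[OF assms(3), of p z n] assms(3)[of n] that P(1) assms(2)
      by (simp add: Lip0_ball_iff subset_iff)
    then have "- dist p z / \<rho> \<le> g n p / \<rho>" and "g n p / \<rho> \<le> dist p z / \<rho>"
      using \<open>\<rho> > 0\<close> by (intro divide_right_mono; simp)+
    then show ?thesis
      by (auto intro: floor_mono)
  qed
  then have "range \<phi> \<subseteq> PiE P (\<lambda>p. {\<lfloor>- dist p z / \<rho>\<rfloor> .. \<lfloor>dist p z / \<rho>\<rfloor>})"
    unfolding \<phi>_def by auto
  then have "finite (range \<phi>)"
    using P(2) by (rule finite_subset[OF _ finite_PiE]) simp
  then obtain r where r: "finite (range r)" "\<And>n. \<phi> (r n) = \<phi> n"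
    using finite_range_representatives by blast
  have "\<bar>g n x - g (r n) x\<bar> \<le> s" if "x \<in> M" for n x
  proof -
    obtain p where p: "p \<in> P" "dist p x < \<rho>" using P(3) \<open>x \<in> M\<close> by auto
    have "\<lfloor>g (r n) p / \<rho>\<rfloor> = \<lfloor>g n p / \<rho>\<rfloor>"
      using fun_cong[OF r(2)[of n], of p] p(1) unfolding \<phi>_def by simp
    then have "\<bar>g (r n) p - g n p\<bar> < \<rho>"
      by (rule floor_divide_eq_imp_abs_diff_less[OF \<open>\<rho> > 0\<close>])
    moreover have near: "\<bar>g m x - g m p\<bar> \<le> dist p x" for m
      using Lip0_ballD[OF assms(3) \<open>x \<in> M\<close>, of p m] p(1) P(1) by (auto simp: dist_commute)
    ultimately show ?thesis
      using near[of n] near[of "r n"] p(2) unfolding \<rho>_def by linarith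
  qed
  with r(1) show ?thesis using that by blast
qed

lemma lipschitz_gluing:
  fixes f u :: "'a::metric_space \<Rightarrow> real"
  assumes "0 < \<epsilon>" "\<epsilon> \<le> 1/2"
    and f: "\<And>x y. x \<in> M \<Longrightarrow> y \<in> M \<Longrightarrow> \<bar>f x - f y\<bar> \<le> dist x y"
    and f_flat: "\<And>x y. x \<in> M \<Longrightarrow> y \<in> M \<Longrightarrow> dist x y < \<eta> \<Longrightarrow> \<bar>f x - f y\<bar> \<le> \<epsilon> * dist x y"
    and u: "\<And>x y. x \<in> M \<Longrightarrow> y \<in> M \<Longrightarrow> \<bar>u x - u y\<bar> \<le> dist x y"
    and u_small: "\<And>x. x \<in> M \<Longrightarrow> \<bar>u x\<bar> \<le> \<epsilon> * \<eta> / 2"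
    and "x \<in> M" "y \<in> M"
  shows "\<bar>((1 - \<epsilon>/2) * f x + 1/2 * u x) - ((1 - \<epsilon>/2) * f y + 1/2 * u y)\<bar> \<le> dist x y"
proof -
  define a where "a = 1 - \<epsilon>/2"
  have a: "0 \<le> a" "a \<le> 1" using assms(1,2) unfolding a_def by auto
  have "(a * f x + 1/2 * u x) - (a * f y + 1/2 * u y) = a * (f x - f y) + 1/2 * (u x - u y)"
    by (simp add: field_simps)
  then have "\<bar>(a * f x + 1/2 * u x) - (a * f y + 1/2 * u y)\<bar> \<le> a * \<bar>f x - f y\<bar> + 1/2 * \<bar>u x - u y\<bar>"
    using abs_triangle_ineq[of "a * (f x - f y)" "1/2 * (u x - u y)"] a(1) by (simp add: abs_mult)
  also have "\<dots> \<le> dist x y"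
  proof (cases "dist x y < \<eta>")
    case True
    have "a * \<bar>f x - f y\<bar> \<le> 1 * (\<epsilon> * dist x y)"
      using f_flat[OF \<open>x \<in> M\<close> \<open>y \<in> M\<close> True] a assms(1)
      by (intro mult_mono) auto
    also have "\<dots> \<le> 1/2 * dist x y"
      using assms(2) mult_right_mono[of \<epsilon> "1/2" "dist x y"] by simp
    finally have "a * \<bar>f x - f y\<bar> + 1/2 * \<bar>u x - u y\<bar> \<le> 1/2 * dist x y + 1/2 * dist x y"
      using u[OF \<open>x \<in> M\<close> \<open>y \<in> M\<close>] by (intro add_mono) auto
    then show ?thesis by simp
  next
    case False
    have "a * \<bar>f x - f y\<bar> \<le> a * dist x y"
      using f[OF \<open>x \<in> M\<close> \<open>y \<in> M\<close>] a(1) by (rule mult_left_mono)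
    moreover have "\<bar>u x - u y\<bar> \<le> \<epsilon> * \<eta>"
      using u_small[OF \<open>x \<in> M\<close>] u_small[OF \<open>y \<in> M\<close>] by linarith
    moreover have "\<epsilon> * \<eta> \<le> \<epsilon> * dist x y"
      using False assms(1) by (intro mult_left_mono) auto
    ultimately show ?thesis
      unfolding a_def by (simp add: algebra_simps)
  qed
  finally show ?thesis unfolding a_def .
qed

lemma fnorm_add_ge_gluing:
  assumes "\<mu> \<in> free_space M z" "\<nu> \<in> free_space M z" "z \<in> M" "0 < \<epsilon>" "\<epsilon> \<le> 1/2"
    and f: "f \<in> Lip0_ball M z" "1 - \<epsilon> < \<mu> f" "\<bar>\<nu> f\<bar> \<le> \<epsilon>"
    and f_flat: "\<And>x y. x \<in> M \<Longrightarrow> y \<in> M \<Longrightarrow> dist x y < \<eta> \<Longrightarrow> \<bar>f x - f y\<bar> \<le> \<epsilon> * dist x y"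
    and g: "g \<in> Lip0_ball M z" "t - \<epsilon> < \<nu> g"
    and g': "g' \<in> Lip0_ball M z" "\<bar>\<nu> g'\<bar> \<le> \<epsilon>"
    and close: "\<And>x. x \<in> M \<Longrightarrow> \<bar>g x - g' x\<bar> \<le> min (2 * \<delta>) (\<epsilon> * \<eta>)"
    and \<mu>_small: "\<And>u. u \<in> Lip0_ball M z \<Longrightarrow> \<forall>x\<in>M. \<bar>u x\<bar> \<le> \<delta> \<Longrightarrow> \<bar>\<mu> u\<bar> \<le> \<epsilon>"
  shows "1 + t/4 - 4 * \<epsilon> \<le> fnorm M z (\<lambda>\<phi>. \<mu> \<phi> + \<nu> \<phi>)"
proof -
  define a where "a = 1 - \<epsilon>/2"
  have a: "0 \<le> a" "\<bar>a\<bar> \<le> 1" using assms(4,5) unfolding a_def by auto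
  define u where "u = (\<lambda>x. 1/2 * g x + (- 1/2) * g' x)"
  define h where "h = (\<lambda>x. a * f x + 1/2 * u x)"
  have u_Lip: "\<bar>u x - u y\<bar> \<le> dist x y" if "x \<in> M" "y \<in> M" for x y
    using Lip0_ballD[OF g(1) that] Lip0_ballD[OF g'(1) that] unfolding u_def by (simp add: abs_le_iff)
  have u_small: "\<bar>u x\<bar> \<le> \<delta>" "\<bar>u x\<bar> \<le> \<epsilon> * \<eta> / 2" if "x \<in> M" for x
    using close[OF that] unfolding u_def abs_le_iff min.bounded_iff by auto
  have u: "u \<in> Lip0_ball M z"
    using g(1) g'(1) u_Lip by (simp add: Lip0_ball_iff u_def)
  have h: "h \<in> Lip0_ball M z"
    using f(1) u lipschitz_gluing[OF assms(4,5) _ f_flat u_Lip u_small(2)]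
    by (simp add: Lip0_ball_iff h_def a_def Lip0_ballD)
  have "\<mu> h = a * \<mu> f + 1/2 * \<mu> u"
    unfolding h_def by (rule free_space_lincomb[OF assms(1) f(1) u h[unfolded h_def]])
  moreover have "\<bar>\<mu> u\<bar> \<le> \<epsilon>"
    using \<mu>_small[OF u] u_small(1) by blast
  moreover have "a * (1 - \<epsilon>) \<le> a * \<mu> f"
    using f(2) a by (intro mult_left_mono) auto
  moreover have "1 - 3/2 * \<epsilon> \<le> a * (1 - \<epsilon>)"
    unfolding a_def by (simp add: algebra_simps)
  ultimately have \<mu>h: "1 - 2 * \<epsilon> \<le> \<mu> h"
    by (simp add: abs_le_iff)
  have "\<nu> u = 1/2 * \<nu> g + (- 1/2) * \<nu> g'"
    unfolding u_def by (rule free_space_lincomb[OF assms(2) g(1) g'(1) u[unfolded u_def]])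
  moreover have "\<nu> h = a * \<nu> f + 1/2 * \<nu> u"
    unfolding h_def by (rule free_space_lincomb[OF assms(2) f(1) u h[unfolded h_def]])
  ultimately have "\<nu> h = a * \<nu> f + \<nu> g / 4 - \<nu> g' / 4"
    by simp
  moreover have "\<bar>a * \<nu> f\<bar> \<le> 1 * \<epsilon>"
    unfolding abs_mult using a f(3) by (intro mult_mono) auto
  ultimately have \<nu>h: "t/4 - 3/2 * \<epsilon> \<le> \<nu> h"
    using g(2) g'(2) by (simp add: abs_le_iff)
  have "\<mu> h + \<nu> h \<le> fnorm M z (\<lambda>\<phi>. \<mu> \<phi> + \<nu> \<phi>)"
    by (rule fnorm_add_lower[OF assms(1-3) h])
  with \<mu>h \<nu>h \<open>0 < \<epsilon>\<close> show ?thesis by linarith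
qed

lemma wstar_null_eventually_small:
  assumes "wstar_null M z \<nu>" "\<phi> \<in> lip0 M z" "e > 0"
  shows "\<forall>\<^sub>F n in sequentially. \<bar>\<nu> n \<phi>\<bar> \<le> e"
proof -
  have "(\<lambda>n. \<bar>\<nu> n \<phi>\<bar>) \<longlonglongrightarrow> 0"
    using assms(1,2) tendsto_rabs_zero unfolding wstar_null_def by blast
  from order_tendstoD(2)[OF this assms(3)] show ?thesis
    by (rule eventually_mono) simp
qed

lemma liminf_fnorm_add_wstar_null_ge:
  assumes "compact M" "z \<in> M" "lip0_one_norming M z" "t > 0"
    and \<mu>: "\<mu> \<in> free_space M z" "fnorm M z \<mu> = 1"
    and \<nu>: "\<And>n. \<nu> n \<in> free_space M z" "wstar_null M z \<nu>" "\<And>n. t \<le> fnorm M z (\<nu> n)"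
  shows "ereal (1 + t/8) \<le> liminf (\<lambda>n. ereal (fnorm M z (\<lambda>\<phi>. \<mu> \<phi> + \<nu> n \<phi>)))"
proof -
  define \<epsilon> where "\<epsilon> = min (1/2) (t/32)"
  have \<epsilon>: "0 < \<epsilon>" "\<epsilon> \<le> 1/2" "4 * \<epsilon> \<le> t/8"
    using assms(4) unfolding \<epsilon>_def by auto
  obtain f where f: "f \<in> lip0 M z" "f \<in> Lip0_ball M z" "1 - \<epsilon> < \<mu> f"
    using lip0_one_norming_witness[OF assms(3) \<mu>(1), of "1 - \<epsilon>"] \<mu>(2) \<epsilon>(1) by auto
  obtain \<eta> where "\<eta> > 0" and "\<forall>x\<in>M. \<forall>y\<in>M.
      0 < dist x y \<and> dist x y < \<eta> \<longrightarrow> \<bar>f x - f y\<bar> \<le> \<epsilon> * dist x y"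
    using f(1) \<epsilon>(1) unfolding lip0_def by blast
  then have f_flat: "\<bar>f x - f y\<bar> \<le> \<epsilon> * dist x y" if "x \<in> M" "y \<in> M" "dist x y < \<eta>" for x y
    using that by (cases "x = y") auto
  obtain \<delta> where "\<delta> > 0" and \<delta>: "\<And>u. u \<in> Lip0_ball M z \<Longrightarrow> \<forall>x\<in>M. \<bar>u x\<bar> \<le> \<delta> \<Longrightarrow> \<bar>\<mu> u\<bar> \<le> \<epsilon>"
    using free_space_small_on_uniformly_small[OF \<mu>(1) \<epsilon>(1)] by blast
  have "\<exists>g. g \<in> lip0 M z \<and> g \<in> Lip0_ball M z \<and> t - \<epsilon> < \<nu> n g" for n
    using lip0_one_norming_witness[OF assms(3) \<nu>(1), of "t - \<epsilon>" n] \<nu>(3)[of n] \<epsilon>(1) by force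
  then obtain g where g: "\<And>n. g n \<in> lip0 M z" "\<And>n. g n \<in> Lip0_ball M z" "\<And>n. t - \<epsilon> < \<nu> n (g n)"
    by metis
  obtain r where r: "finite (range r)" "\<And>n x. x \<in> M \<Longrightarrow> \<bar>g n x - g (r n) x\<bar> \<le> min (2 * \<delta>) (\<epsilon> * \<eta>)"
    using Lip0_ball_sequence_uniformly_close[OF assms(1,2), of g "min (2 * \<delta>) (\<epsilon> * \<eta>)"]
      g(2) \<open>\<delta> > 0\<close> \<open>\<eta> > 0\<close> \<epsilon>(1) by auto
  have "\<forall>\<^sub>F n in sequentially. \<forall>m\<in>range r. \<bar>\<nu> n (g m)\<bar> \<le> \<epsilon>"
    by (rule eventually_ball_finite[OF r(1)])
      (use wstar_null_eventually_small[OF \<nu>(2) g(1) \<epsilon>(1)] in blast)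
  with wstar_null_eventually_small[OF \<nu>(2) f(1) \<epsilon>(1)]
  have "\<forall>\<^sub>F n in sequentially. \<bar>\<nu> n f\<bar> \<le> \<epsilon> \<and> (\<forall>m\<in>range r. \<bar>\<nu> n (g m)\<bar> \<le> \<epsilon>)"
    by (rule eventually_conj)
  then have "\<forall>\<^sub>F n in sequentially. ereal (1 + t/8) \<le> ereal (fnorm M z (\<lambda>\<phi>. \<mu> \<phi> + \<nu> n \<phi>))"
  proof (rule eventually_mono)
    fix n assume small: "\<bar>\<nu> n f\<bar> \<le> \<epsilon> \<and> (\<forall>m\<in>range r. \<bar>\<nu> n (g m)\<bar> \<le> \<epsilon>)"
    have "1 + t/4 - 4 * \<epsilon> \<le> fnorm M z (\<lambda>\<phi>. \<mu> \<phi> + \<nu> n \<phi>)"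
      using small by (intro fnorm_add_ge_gluing[OF \<mu>(1) \<nu>(1) assms(2) \<epsilon>(1,2) f(2,3) _ f_flat
          g(2,3) g(2) _ r(2) \<delta>]) auto
    with \<epsilon>(3) show "ereal (1 + t/8) \<le> ereal (fnorm M z (\<lambda>\<phi>. \<mu> \<phi> + \<nu> n \<phi>))"
      by simp
  qed
  then show ?thesis
    by (rule Liminf_bounded)
qed

theorem proposition6p1:
  fixes M :: "'a::metric_space set" and z :: 'a
  assumes "compact M" and "z \<in> M"
    and "lip0_one_norming M z"
  shows "wstar_AUC M z"
  unfolding wstar_AUC_def
proof (intro allI impI)
  fix t :: real
  assume "t > 0"
  have "ereal (t/8) \<le> wstar_AUC_modulus M z t"
    unfolding wstar_AUC_modulus_def
  proof (rule Inf_greatest, clarify)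
    fix \<mu> \<nu>
    assume "\<mu> \<in> free_space M z" "fnorm M z \<mu> = 1" "\<forall>n. \<nu> n \<in> free_space M z"
      "wstar_null M z \<nu>" "\<forall>n. t \<le> fnorm M z (\<nu> n)"
    then have "ereal (t/8) + 1 \<le> liminf (\<lambda>n. ereal (fnorm M z (\<lambda>\<phi>. \<mu> \<phi> + \<nu> n \<phi>)))"
      using liminf_fnorm_add_wstar_null_ge[OF assms \<open>t > 0\<close>] by (simp add: add.commute)
    then show "ereal (t/8) \<le> liminf (\<lambda>n. ereal (fnorm M z (\<lambda>\<phi>. \<mu> \<phi> + \<nu> n \<phi>))) - 1"
      by (simp add: ereal_le_minus)
  qed
  with \<open>t > 0\<close> show "0 < wstar_AUC_modulus M z t"
    by (simp add: less_le_trans[rotated])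
qed

end
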